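(* Let $\alpha\neq0$ be real, let $\mathbf{u}=(u_1,u_2)$ and $\mathbf{v}=(-u_1,u_2)$ be constant unit vectors with $u_1u_2\neq0$, and let $\mathbf{f}\in C^2_c(S^1;\mathbb{D})$. Then: (i) $\mathcal{L}_\alpha\mathbf{f}=0$ if and only if $\mathbf{f}=\tilde\nabla\varphi$ for some function $\varphi$; (ii) $\mathcal{T}_\alpha\mathbf{f}=0$ if and only if $\mathbf{f}=\tilde\nabla^\perp\psi$ for some function $\psi$.
   Context: $\mathbb{D}$ is the open unit disc in $\mathbb{R}^2$; $C_c^2(S^1;\mathbb{D})$ is the space of $C^2$ vector fields with compact support in $\mathbb{D}$. $\mathbf{a}^\perp=(-a_2,a_1)$. $\mathcal{L}_\alpha\mathbf{f}(\mathbf{x})=-\int_0^\infty\mathbf{u}\cdot\mathbf{f}(\mathbf{x}+t\mathbf{u})\,dt+\alpha\int_0^\infty\mathbf{v}\cdot\mathbf{f}(\mathbf{x}+t\mathbf{v})\,dt$ and $\mathcal{T}_\alpha\mathbf{f}(\mathbf{x})=-\int_0^\infty\mathbf{u}^\perp\cdot\mathbf{f}(\mathbf{x}+t\mathbf{u})\,dt+\alpha\int_0^\infty\mathbf{v}^\perp\cdot\mathbf{f}(\mathbf{x}+t\mathbf{v})\,dt$. Define $\partial_{\tilde x_1}=-(1+\alpha)u_1u_2\partial_{x_1}+(1-\alpha)u_2^2\partial_{x_2}$, $\partial_{\tilde x_2}=(1-\alpha)u_1^2\partial_{x_1}-(1+\alpha)u_1u_2\partial_{x_2}$ (the partial derivatives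 in the linear coordinates $\tilde x$ given by $x_1=-(1+\alpha)u_1u_2\tilde x_1+(1-\alpha)u_1^2\tilde x_2$, $x_2=(1-\alpha)u_2^2\tilde x_1-(1+\alpha)u_1u_2\tilde x_2$), and $\tilde\nabla\varphi=(\partial_{\tilde x_1}\varphi,\partial_{\tilde x_2}\varphi)$, $\tilde\nabla^\perp\psi=(-\partial_{\tilde x_2}\psi,\partial_{\tilde x_1}\psi)$. *)

theory Defs
  imports "HOL-Analysis.Analysis"
begin

definition C2 :: "('a::euclidean_space \<Rightarrow> 'b::real_normed_vector) \<Rightarrow> bool" where
  "C2 f \<longleftrightarrow> (\<exists>f' f''. (\<forall>x. (f has_derivative blinfun_apply (f' x)) (at x)) \<and>
      (\<forall>x. (f' has_derivative blinfun_apply (f'' x)) (at x)) \<and> continuous_on UNIV f'')"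

definition supp_in_disc :: "(real^2 \<Rightarrow> real^2) \<Rightarrow> bool" where
  "supp_in_disc f \<longleftrightarrow> compact (closure {x. f x \<noteq> 0}) \<and> closure {x. f x \<noteq> 0} \<subseteq> ball 0 1"

definition perp :: "real^2 \<Rightarrow> real^2" where
  "perp a = vector [-(a$2), a$1]"

definition pd :: "2 \<Rightarrow> (real^2 \<Rightarrow> real) \<Rightarrow> real^2 \<Rightarrow> real" where
  "pd i \<phi> x = frechet_derivative \<phi> (at x) (axis i 1)"

definition dt1 :: "real \<Rightarrow> real^2 \<Rightarrow> (real^2 \<Rightarrow> real) \<Rightarrow> real^2 \<Rightarrow> real" where
  "dt1 \<alpha> u \<phi> x = -(1+\<alpha>) * u$1 * u$2 * pd 1 \<phi> x + (1-\<alpha>) * (u$2)^2 * pd 2 \<phi> x"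

definition dt2 :: "real \<Rightarrow> real^2 \<Rightarrow> (real^2 \<Rightarrow> real) \<Rightarrow> real^2 \<Rightarrow> real" where
  "dt2 \<alpha> u \<phi> x = (1-\<alpha>) * (u$1)^2 * pd 1 \<phi> x - (1+\<alpha>) * u$1 * u$2 * pd 2 \<phi> x"

definition tgrad :: "real \<Rightarrow> real^2 \<Rightarrow> (real^2 \<Rightarrow> real) \<Rightarrow> real^2 \<Rightarrow> real^2" where
  "tgrad \<alpha> u \<phi> x = vector [dt1 \<alpha> u \<phi> x, dt2 \<alpha> u \<phi> x]"

definition tgrad_perp :: "real \<Rightarrow> real^2 \<Rightarrow> (real^2 \<Rightarrow> real) \<Rightarrow> real^2 \<Rightarrow> real^2" where
  "tgrad_perp \<alpha> u \<psi> x = vector [-(dt2 \<alpha> u \<psi> x), dt1 \<alpha> u \<psi> x]"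

definition Lop :: "real \<Rightarrow> real^2 \<Rightarrow> real^2 \<Rightarrow> (real^2 \<Rightarrow> real^2) \<Rightarrow> real^2 \<Rightarrow> real" where
  "Lop \<alpha> u v f x = - integral {0..} (\<lambda>t. u \<bullet> f (x + t *\<^sub>R u))
                     + \<alpha> * integral {0..} (\<lambda>t. v \<bullet> f (x + t *\<^sub>R v))"

definition Top :: "real \<Rightarrow> real^2 \<Rightarrow> real^2 \<Rightarrow> (real^2 \<Rightarrow> real^2) \<Rightarrow> real^2 \<Rightarrow> real" where
  "Top \<alpha> u v f x = - integral {0..} (\<lambda>t. perp u \<bullet> f (x + t *\<^sub>R u))
                     + \<alpha> * integral {0..} (\<lambda>t. perp v \<bullet> f (x + t *\<^sub>R v))"

end

theory Submission
  imports Defs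
begin

text \<open>Write \<open>R\<^sub>w f x = \<integral>\<^sub>0\<^sup>\<infinity> w \<bullet> f (x + t w) dt\<close> for the ray transform, so that
  \<open>L\<^sub>\<alpha> f = - R\<^sub>u f + \<alpha> R\<^sub>v f\<close>. By the fundamental theorem of calculus the derivative of
  \<open>R\<^sub>w f\<close> in direction \<open>w\<close> is \<open>- w \<bullet> f\<close>. On the other hand
  \<open>u \<bullet> \<nabla>\<phi> = -2\<alpha>u\<^sub>1u\<^sub>2 \<partial>\<^sub>u\<phi>\<close> and \<open>v \<bullet> \<nabla>\<phi> = -2u\<^sub>1u\<^sub>2 \<partial>\<^sub>v\<phi>\<close>, writing \<open>\<nabla>\<close> for the
  tilde gradient, and since \<open>u\<close> and \<open>v\<close> span the plane these two identities characterise it.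

  If \<open>f = \<nabla>\<phi>\<close>, integrating along the rays gives
  \<open>L\<^sub>\<alpha> f x = 2\<alpha>u\<^sub>1u\<^sub>2 (\<phi> (x + 2u) - \<phi> (x + 2v))\<close>, which vanishes because \<open>\<nabla>\<phi> = 0\<close>
  forces \<open>\<phi>\<close> to be constant on the connected annulus outside the support. Conversely, if
  \<open>L\<^sub>\<alpha> f = 0\<close> on the disc then \<open>R\<^sub>u f = \<alpha> R\<^sub>v f\<close> there, so \<open>\<phi> = R\<^sub>v f / (2u\<^sub>1u\<^sub>2)\<close>
  satisfies both identities; \<open>R\<^sub>v f\<close> has zero derivative, hence vanishes, between the support and
  the unit circle, so \<open>\<phi>\<close> extends by \<open>0\<close> to a differentiable function on the plane.
  Part (ii) is part (i) applied to \<open>- f\<^sup>\<perp>\<close>, because \<open>T\<^sub>\<alpha> f = L\<^sub>\<alpha> (- f\<^sup>\<perp>)\<close> and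
  \<open>f = \<nabla>\<^sup>\<perp>\<psi>\<close> iff \<open>- f\<^sup>\<perp> = \<nabla>\<psi>\<close>.\<close>

definition C1 :: "('a::euclidean_space \<Rightarrow> 'b::real_normed_vector) \<Rightarrow> bool" where
  "C1 f \<longleftrightarrow> (\<exists>f'. (\<forall>x. (f has_derivative blinfun_apply (f' x)) (at x)) \<and> continuous_on UNIV f')"

lemma C2_imp_C1:
  assumes "C2 f"
  shows "C1 f"
proof -
  obtain f' f'' where "\<And>x. (f has_derivative blinfun_apply (f' x)) (at x)"
      and "\<And>x. (f' has_derivative blinfun_apply (f'' x)) (at x)"
    using assms unfolding C2_def by blast
  moreover from this(2) have "continuous_on UNIV f'"
    by (blast intro: continuous_at_imp_continuous_on has_derivative_continuous)
  ultimately show ?thesis unfolding C1_def by blast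
qed

lemma C1_imp_continuous: "C1 f \<Longrightarrow> continuous_on UNIV f"
  unfolding C1_def by (blast intro: continuous_at_imp_continuous_on has_derivative_continuous)

lemma C1_compose_bounded_linear:
  assumes "C1 f" and L: "bounded_linear L"
  shows "C1 (\<lambda>x. L (f x))"
proof -
  obtain f' where f': "\<And>x. (f has_derivative blinfun_apply (f' x)) (at x)" "continuous_on UNIV f'"
    using assms(1) unfolding C1_def by blast
  have "blinfun_apply (Blinfun L o\<^sub>L f' x) = (\<lambda>h. L (f' x h))" for x
    by (simp add: bounded_linear_Blinfun_apply[OF L] fun_eq_iff)
  then have "((\<lambda>x. L (f x)) has_derivative blinfun_apply (Blinfun L o\<^sub>L f' x)) (at x)" for x
    using bounded_linear.has_derivative[OF L f'(1)] by simp
  moreover have "continuous_on UNIV (\<lambda>x. Blinfun L o\<^sub>L f' x)"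
    by (intro continuous_intros f'(2))
  ultimately show ?thesis unfolding C1_def by (intro exI[of _ "\<lambda>x. Blinfun L o\<^sub>L f' x"]) blast
qed

definition ray_transform :: "('a::real_inner \<Rightarrow> 'a) \<Rightarrow> 'a \<Rightarrow> 'a \<Rightarrow> real" where
  "ray_transform f w x = integral {0..} (\<lambda>t. w \<bullet> f (x + t *\<^sub>R w))"

lemma norm_add_scaleR_unit_ge:
  assumes "norm w = 1"
  shows "\<bar>t\<bar> - norm x \<le> norm (x + t *\<^sub>R w)"
  using norm_triangle_ineq2[of "t *\<^sub>R w" "- x"] assms by (simp add: add.commute)

lemma ray_transform_eq_segment_integral:
  fixes f :: "'a::euclidean_space \<Rightarrow> 'a"
  assumes "continuous_on UNIV f" "norm w = 1" "0 \<le> R" "\<And>y. R < norm y \<Longrightarrow> f y = 0"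
    and "norm x + R < T"
  shows "ray_transform f w x = integral {0..T} (\<lambda>t. w \<bullet> f (x + t *\<^sub>R w))"
proof -
  let ?g = "\<lambda>t. w \<bullet> f (x + t *\<^sub>R w)"
  have "?g integrable_on {0..T}"
    by (intro integrable_continuous_real continuous_intros continuous_on_compose2[OF assms(1)]) auto
  then have segment: "(?g has_integral integral {0..T} ?g) {0..T}" by blast
  have tail: "(?g has_integral 0) {T..}"
  proof (rule has_integral_is_0)
    fix t assume "t \<in> {T..}"
    then have "R < norm (x + t *\<^sub>R w)"
      using norm_add_scaleR_unit_ge[OF assms(2), of t x] assms(3,5) by auto
    then show "?g t = 0" using assms(4) by simp
  qed
  have overlap: "negligible ({0..T} \<inter> {T..})"
    by (rule negligible_subset[of "{T}"]) auto
  have "0 \<le> T"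
    using assms(3,5) norm_ge_zero[of x] by linarith
  then have "{0..T} \<union> {T..} = {0::real..}" by auto
  with has_integral_Un[OF segment tail overlap] show ?thesis
    unfolding ray_transform_def by (simp add: integral_unique)
qed

lemma has_integral_derivative_along_ray:
  fixes g :: "'a::real_normed_vector \<Rightarrow> 'b::banach"
  assumes g': "\<And>y. (g has_derivative g' y) (at y)" and "0 \<le> T"
  shows "((\<lambda>t. g' (x + t *\<^sub>R w) w) has_integral (g (x + T *\<^sub>R w) - g x)) {0..T}"
proof -
  have "((\<lambda>t. g (x + t *\<^sub>R w)) has_vector_derivative g' (x + t *\<^sub>R w) w) (at t within {0..T})" for t
  proof -
    have "((\<lambda>t. x + t *\<^sub>R w) has_derivative (\<lambda>h. h *\<^sub>R w)) (at t)"
      by (auto intro!: derivative_eq_intros)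
    from has_derivative_compose[OF this g']
    have "((\<lambda>t. g (x + t *\<^sub>R w)) has_derivative (\<lambda>h. h *\<^sub>R g' (x + t *\<^sub>R w) w)) (at t)"
      using linear_scale[OF has_derivative_linear[OF g']] by (simp add: o_def)
    then show ?thesis
      unfolding has_vector_derivative_def by (rule has_derivative_at_withinI)
  qed
  from fundamental_theorem_of_calculus[OF assms(2) this] show ?thesis by simp
qed

lemma has_derivative_segment_integral:
  fixes f :: "'a::euclidean_space \<Rightarrow> 'a"
  assumes f': "\<And>y. (f has_derivative blinfun_apply (f' y)) (at y)" "continuous_on UNIV f'"
  shows "((\<lambda>x. integral {0..T} (\<lambda>t. w \<bullet> f (x + t *\<^sub>R w))) has_derivative
           (\<lambda>h. integral {0..T} (\<lambda>t. w \<bullet> f' (x + t *\<^sub>R w) h))) (at x)"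
proof -
  have fc: "continuous_on UNIV f"
    using f'(1) by (blast intro: continuous_at_imp_continuous_on has_derivative_continuous)
  have leibniz: "((\<lambda>x. integral (cbox 0 T) (\<lambda>t. w \<bullet> f (x + t *\<^sub>R w))) has_derivative
     integral (cbox 0 T) (\<lambda>t. blinfun_inner_left w o\<^sub>L f' (x + t *\<^sub>R w))) (at x within UNIV)"
  proof (rule leibniz_rule)
    fix y t
    have "((\<lambda>y. f (y + t *\<^sub>R w)) has_derivative f' (y + t *\<^sub>R w)) (at y)"
      using has_derivative_compose[OF _ f'(1), of "\<lambda>y. y + t *\<^sub>R w" "\<lambda>h. h"]
      by (simp add: o_def has_derivative_add_const has_derivative_ident)
    then show "((\<lambda>y. w \<bullet> f (y + t *\<^sub>R w)) has_derivative
        blinfun_apply (blinfun_inner_left w o\<^sub>L f' (y + t *\<^sub>R w))) (at y within UNIV)"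
      by (auto intro!: derivative_eq_intros simp: inner_commute)
  next
    fix y :: 'a
    show "(\<lambda>t. w \<bullet> f (y + t *\<^sub>R w)) integrable_on cbox 0 T"
      by (intro integrable_continuous continuous_intros continuous_on_compose2[OF fc]) auto
  next
    show "continuous_on (UNIV \<times> cbox 0 T) (\<lambda>(y, t). blinfun_inner_left w o\<^sub>L f' (y + t *\<^sub>R w))"
      unfolding split_beta
      by (intro continuous_intros continuous_on_compose2[OF f'(2)]) auto
  qed auto
  have "(\<lambda>t. blinfun_inner_left w o\<^sub>L f' (x + t *\<^sub>R w)) integrable_on cbox 0 T"
    by (intro integrable_continuous continuous_intros continuous_on_compose2[OF f'(2)]) auto
  then have "blinfun_apply (integral (cbox 0 T) (\<lambda>t. blinfun_inner_left w o\<^sub>L f' (x + t *\<^sub>R w))) =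
      (\<lambda>h. integral {0..T} (\<lambda>t. w \<bullet> f' (x + t *\<^sub>R w) h))"
    by (simp add: blinfun_apply_integral inner_commute fun_eq_iff)
  with leibniz show ?thesis by simp
qed

lemma ray_transform_derivative_along_ray:
  fixes f :: "'a::euclidean_space \<Rightarrow> 'a"
  assumes "C1 f" and w: "norm w = 1" and "0 \<le> R" and vanish: "\<And>y. R < norm y \<Longrightarrow> f y = 0"
  shows "ray_transform f w differentiable at x"
    and "frechet_derivative (ray_transform f w) (at x) w = - (w \<bullet> f x)"
proof -
  obtain f' where f': "\<And>y. (f has_derivative blinfun_apply (f' y)) (at y)" "continuous_on UNIV f'"
    using assms(1) unfolding C1_def by blast
  txt \<open>On \<open>ball x 1\<close> every ray can be cut off at the same length \<open>T\<close>, which brings the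
    Leibniz rule for integrals over a compact interval into play.\<close>
  define T where "T = norm x + R + 1"
  define D where "D h = integral {0..T} (\<lambda>t. w \<bullet> f' (x + t *\<^sub>R w) h)" for h
  have segment: "ray_transform f w y = integral {0..T} (\<lambda>t. w \<bullet> f (y + t *\<^sub>R w))"
    if "y \<in> ball x 1" for y
  proof (rule ray_transform_eq_segment_integral[OF C1_imp_continuous[OF assms(1)] w assms(3) vanish])
    show "norm y + R < T"
      using that norm_triangle_ineq2[of y x] by (simp add: T_def dist_norm norm_minus_commute)
  qed
  have R': "(ray_transform f w has_derivative D) (at x)"
    using has_derivative_segment_integral[OF f', of T w x] unfolding D_def
    by (rule has_derivative_transform_within_open[where s="ball x 1"]) (use segment in auto)
  then show "ray_transform f w differentiable at x"
    using differentiable_def by blast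
  have frechet_D: "frechet_derivative (ray_transform f w) (at x) = D"
    using frechet_derivative_at[OF R'] by simp
  have "((\<lambda>y. w \<bullet> f y) has_derivative (\<lambda>h. w \<bullet> f' y h)) (at y)" for y
    using f'(1) by (auto intro!: derivative_eq_intros)
  from has_integral_derivative_along_ray[OF this, of T x w]
  have "D w = w \<bullet> f (x + T *\<^sub>R w) - w \<bullet> f x"
    using assms(3) unfolding D_def T_def by (simp add: integral_unique)
  moreover have "f (x + T *\<^sub>R w) = 0"
    using vanish norm_add_scaleR_unit_ge[OF w, of T x] assms(3) by (simp add: T_def)
  ultimately show "frechet_derivative (ray_transform f w) (at x) w = - (w \<bullet> f x)"
    using frechet_D by simp
qed

lemma ray_transform_of_directional_derivative:
  fixes f :: "'a::euclidean_space \<Rightarrow> 'a"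
  assumes "continuous_on UNIV f" "norm w = 1" "0 \<le> R" "\<And>y. R < norm y \<Longrightarrow> f y = 0"
    and "norm x + R < T"
    and \<phi>: "\<And>y. \<phi> differentiable at y"
    and along: "\<And>y. w \<bullet> f y = c * frechet_derivative \<phi> (at y) w"
  shows "ray_transform f w x = c * (\<phi> (x + T *\<^sub>R w) - \<phi> x)"
proof -
  have "0 \<le> T" using assms(3,5) norm_ge_zero[of x] by linarith
  from has_integral_derivative_along_ray[OF frechet_derivative_works[THEN iffD1, OF \<phi>] this]
  have "((\<lambda>t. w \<bullet> f (x + t *\<^sub>R w)) has_integral c * (\<phi> (x + T *\<^sub>R w) - \<phi> x)) {0..T}"
    unfolding along by (rule has_integral_mult_right)
  then show ?thesis
    using ray_transform_eq_segment_integral[OF assms(1-5)] by (simp add: integral_unique)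
qed

lemma has_derivative_zero_unique_annulus:
  fixes g :: "'a::euclidean_space \<Rightarrow> 'b::real_normed_vector"
  assumes "2 \<le> DIM('a)"
    and "\<And>y. r < norm y \<Longrightarrow> norm y < R \<Longrightarrow> (g has_derivative (\<lambda>h. 0)) (at y)"
    and "r < norm y" "norm y < R" "r < norm z" "norm z < R"
  shows "g y = g z"
proof (rule has_derivative_zero_unique_connected[of "{y. r < norm y \<and> norm y < R}" g])
  have "{y::'a. r < norm y \<and> norm y < R} = ball 0 R - cball 0 r" by auto
  then show "open {y::'a. r < norm y \<and> norm y < R}" by (simp add: open_Diff)
  show "connected {y::'a. r < norm y \<and> norm y < R}"
    using connected_annulus(1)[OF assms(1), of r 0 R] by simp
qed (use assms in auto)

lemma has_derivative_zero_extension_ball: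
  fixes g :: "'a::real_normed_vector \<Rightarrow> real"
  assumes g': "\<And>x. norm x < 1 \<Longrightarrow> (g has_derivative g' x) (at x)"
    and "r < 1" and vanish: "\<And>y. r < norm y \<Longrightarrow> norm y < 1 \<Longrightarrow> g y = 0"
  shows "((\<lambda>y. if norm y < 1 then g y else 0) has_derivative
           (if norm x < 1 then g' x else (\<lambda>h. 0))) (at x)"
proof (cases "norm x < 1")
  case True
  from g'[OF True] have "((\<lambda>y. if norm y < 1 then g y else 0) has_derivative g' x) (at x)"
    by (rule has_derivative_transform_within_open[where s="ball 0 1"]) (use True in auto)
  then show ?thesis using True by simp
next
  case False
  have "((\<lambda>y. if norm y < 1 then g y else 0) has_derivative (\<lambda>h. 0)) (at x)"
  proof (rule has_derivative_transform_within_open[where f="\<lambda>y. 0" and s="{y. r < norm y}"])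
    show "open {y::'a. r < norm y}"
      by (simp add: open_Collect_less continuous_on_norm_id)
    show "x \<in> {y. r < norm y}" using False assms(2) by simp
  qed (auto simp: vanish)
  then show ?thesis using False by simp
qed

lemma vec2_eq_iff: "(x::real^2) = y \<longleftrightarrow> x$1 = y$1 \<and> x$2 = y$2"
  by (auto simp: vec_eq_iff forall_2)

lemma inner_vec2: "(x::real^2) \<bullet> y = x$1 * y$1 + x$2 * y$2"
  by (simp add: inner_vec_def sum_2)

lemma norm_reflect_vec2: "norm (vector [-(u$1), u$2] :: real^2) = norm (u :: real^2)"
  by (simp add: norm_vec_def L2_set_def sum_2)

lemma linear_vec2_expansion:
  assumes "linear (L::real^2 \<Rightarrow> real)"
  shows "L h = h$1 * L (axis 1 1) + h$2 * L (axis 2 1)"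
proof -
  have "h = h$1 *\<^sub>R axis 1 1 + h$2 *\<^sub>R axis 2 1"
    by (simp add: vec2_eq_iff axis_def)
  then have "L h = L (h$1 *\<^sub>R axis 1 1 + h$2 *\<^sub>R axis 2 1)" by simp
  also have "\<dots> = h$1 * L (axis 1 1) + h$2 * L (axis 2 1)"
    using assms by (simp add: linear_add linear_scale)
  finally show ?thesis .
qed

lemma linear_vec2_eq_0_if_zero_at_u_v:
  assumes "linear (L::real^2 \<Rightarrow> real)" "u$1 * u$2 \<noteq> 0" "v = vector [-(u$1), u$2]"
    and "L u = 0" "L v = 0"
  shows "L h = 0"
proof -
  have "u$1 * L (axis 1 1) + u$2 * L (axis 2 1) = 0"
    using assms(4) linear_vec2_expansion[OF assms(1), of u] by simp
  moreover have "- u$1 * L (axis 1 1) + u$2 * L (axis 2 1) = 0"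
    using assms(3,5) linear_vec2_expansion[OF assms(1), of v] by simp
  ultimately have "u$1 * L (axis 1 1) = 0" "u$2 * L (axis 2 1) = 0"
    by linarith+
  then have "L (axis 1 1) = 0" "L (axis 2 1) = 0"
    using assms(2) by simp_all
  then show ?thesis using linear_vec2_expansion[OF assms(1), of h] by simp
qed

lemma vec2_eq_iff_inner_u_v:
  assumes "u$1 * u$2 \<noteq> 0" "v = vector [-(u$1), u$2]"
  shows "(a::real^2) = b \<longleftrightarrow> u \<bullet> a = u \<bullet> b \<and> v \<bullet> a = v \<bullet> b"
proof (intro iffI; clarify?)
  assume "u \<bullet> a = u \<bullet> b" "v \<bullet> a = v \<bullet> b"
  then have "u \<bullet> (a - b) = 0" "v \<bullet> (a - b) = 0"
    by (simp_all add: inner_diff_right)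
  with linear_vec2_eq_0_if_zero_at_u_v[OF _ assms, of "\<lambda>h. h \<bullet> (a - b)"]
  have "(a - b) \<bullet> (a - b) = 0"
    by (simp add: bounded_linear.linear[OF bounded_linear_inner_left])
  then show "a = b" by simp
qed simp

lemma frechet_derivative_vec2:
  assumes "\<phi> differentiable at x"
  shows "frechet_derivative \<phi> (at x) h = h$1 * pd 1 \<phi> x + h$2 * pd 2 \<phi> x"
  using linear_vec2_expansion[OF has_derivative_linear[OF frechet_derivative_works[THEN iffD1, OF assms]], of h]
  by (simp add: pd_def)

lemma inner_u_tgrad:
  "u \<bullet> tgrad \<alpha> u \<phi> x = -2*\<alpha>*u$1*u$2 * (u$1 * pd 1 \<phi> x + u$2 * pd 2 \<phi> x)"
  by (simp add: inner_vec2 tgrad_def dt1_def dt2_def algebra_simps power2_eq_square)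

lemma inner_v_tgrad:
  fixes v :: "real^2"
  assumes "v = vector [-(u$1), u$2]"
  shows "v \<bullet> tgrad \<alpha> u \<phi> x = -2*u$1*u$2 * (v$1 * pd 1 \<phi> x + v$2 * pd 2 \<phi> x)"
  using assms by (simp add: inner_vec2 tgrad_def dt1_def dt2_def algebra_simps power2_eq_square)

lemma eq_tgrad_iff:
  fixes v :: "real^2"
  assumes "u$1 * u$2 \<noteq> 0" "v = vector [-(u$1), u$2]" "\<phi> differentiable at x"
  shows "a = tgrad \<alpha> u \<phi> x \<longleftrightarrow>
           u \<bullet> a = -2*\<alpha>*u$1*u$2 * frechet_derivative \<phi> (at x) u \<and>
           v \<bullet> a = -2*u$1*u$2 * frechet_derivative \<phi> (at x) v"
  by (simp add: vec2_eq_iff_inner_u_v[OF assms(1,2)] inner_u_tgrad inner_v_tgrad[OF assms(2)]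
      frechet_derivative_vec2[OF assms(3)])

lemma tgrad_eq_0_iff:
  fixes v :: "real^2"
  assumes "\<alpha> \<noteq> 0" "u$1 * u$2 \<noteq> 0" "v = vector [-(u$1), u$2]" "\<phi> differentiable at x"
  shows "tgrad \<alpha> u \<phi> x = 0 \<longleftrightarrow> frechet_derivative \<phi> (at x) = (\<lambda>h. 0)"
proof -
  have lin: "linear (frechet_derivative \<phi> (at x))"
    using assms(4) frechet_derivative_works has_derivative_linear by blast
  have "tgrad \<alpha> u \<phi> x = 0 \<longleftrightarrow>
      frechet_derivative \<phi> (at x) u = 0 \<and> frechet_derivative \<phi> (at x) v = 0"
    using eq_tgrad_iff[OF assms(2-4), of 0 \<alpha>] assms(1,2) by auto
  also have "\<dots> \<longleftrightarrow> frechet_derivative \<phi> (at x) = (\<lambda>h. 0)"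
    using linear_vec2_eq_0_if_zero_at_u_v[OF lin assms(2,3)] by auto
  finally show ?thesis .
qed

lemma perp_perp: "perp (perp z) = - z"
  by (simp add: perp_def vec2_eq_iff)

lemma inner_perp_left: "perp w \<bullet> z = - (w \<bullet> perp z)"
  by (simp add: perp_def inner_vec2)

lemma bounded_linear_perp: "bounded_linear perp"
proof -
  have "linear perp" by (rule linearI) (simp_all add: perp_def vec2_eq_iff)
  then show ?thesis by (simp add: linear_conv_bounded_linear)
qed

lemma tgrad_perp_eq_perp_tgrad: "tgrad_perp \<alpha> u \<psi> x = perp (tgrad \<alpha> u \<psi> x)"
  by (simp add: tgrad_perp_def tgrad_def perp_def)

lemma eq_tgrad_perp_iff: "a = tgrad_perp \<alpha> u \<psi> x \<longleftrightarrow> - perp a = tgrad \<alpha> u \<psi> x"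
  by (metis perp_perp tgrad_perp_eq_perp_tgrad minus_minus)

lemma Lop_eq_ray_transform: "Lop \<alpha> u v f x = - ray_transform f u x + \<alpha> * ray_transform f v x"
  by (simp add: Lop_def ray_transform_def)

lemma Top_eq_Lop: "Top \<alpha> u v f x = Lop \<alpha> u v (\<lambda>y. - perp (f y)) x"
  by (simp add: Top_def Lop_def inner_perp_left)

lemma Lop_zero_if_eq_tgrad:
  fixes u v :: "real^2" and f :: "real^2 \<Rightarrow> real^2"
  assumes "\<alpha> \<noteq> 0" and u: "norm u = 1" and v: "v = vector [-(u$1), u$2]" and uu: "u$1 * u$2 \<noteq> 0"
    and f: "continuous_on UNIV f" and "r < 1" and vanish: "\<And>y. r < norm y \<Longrightarrow> f y = 0"
    and \<phi>: "\<And>y. \<phi> differentiable at y" and grad: "\<And>y. f y = tgrad \<alpha> u \<phi> y"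
    and x: "x \<in> ball 0 1"
  shows "Lop \<alpha> u v f x = 0"
proof -
  have nv: "norm v = 1" using u v by (simp add: norm_reflect_vec2)
  have vanish1: "\<And>y. 1 < norm y \<Longrightarrow> f y = 0" using assms(6) vanish by simp
  have nx: "norm x + 1 < 2" using x by simp
  have along_u: "u \<bullet> f y = -2*\<alpha>*u$1*u$2 * frechet_derivative \<phi> (at y) u"
    and along_v: "v \<bullet> f y = -2*u$1*u$2 * frechet_derivative \<phi> (at y) v" for y
    using eq_tgrad_iff[OF uu v \<phi>] grad by blast+
  have "ray_transform f u x = -2*\<alpha>*u$1*u$2 * (\<phi> (x + 2 *\<^sub>R u) - \<phi> x)"
    by (rule ray_transform_of_directional_derivative[OF f u zero_le_one vanish1 nx \<phi> along_u])
  moreover have "ray_transform f v x = -2*u$1*u$2 * (\<phi> (x + 2 *\<^sub>R v) - \<phi> x)"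
    by (rule ray_transform_of_directional_derivative[OF f nv zero_le_one vanish1 nx \<phi> along_v])
  moreover have "\<phi> (x + 2 *\<^sub>R u) = \<phi> (x + 2 *\<^sub>R v)"
  proof (rule has_derivative_zero_unique_annulus[where g=\<phi> and r=r and R=3])
    fix y :: "real^2"
    assume "r < norm y" "norm y < 3"
    then have "tgrad \<alpha> u \<phi> y = 0" using grad vanish by metis
    then show "(\<phi> has_derivative (\<lambda>h. 0)) (at y)"
      using tgrad_eq_0_iff[OF assms(1) uu v \<phi>] \<phi> frechet_derivative_works by metis
  next
    have "1 < norm (x + 2 *\<^sub>R w) \<and> norm (x + 2 *\<^sub>R w) < 3" if "norm w = 1" for w
      using norm_add_scaleR_unit_ge[OF that, of 2 x] norm_triangle_ineq[of x "2 *\<^sub>R w"] that nx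
      by auto
    then show "r < norm (x + 2 *\<^sub>R u)" "norm (x + 2 *\<^sub>R u) < 3"
      and "r < norm (x + 2 *\<^sub>R v)" "norm (x + 2 *\<^sub>R v) < 3"
      using u nv assms(6) by fastforce+
  qed simp
  ultimately have "Lop \<alpha> u v f x = 2*\<alpha>*u$1*u$2 * (\<phi> (x + 2 *\<^sub>R v) - \<phi> x)
      - \<alpha> * (2*u$1*u$2 * (\<phi> (x + 2 *\<^sub>R v) - \<phi> x))"
    by (simp add: Lop_eq_ray_transform)
  then show ?thesis by simp
qed

lemma frechet_derivative_ray_transform_of_Lop_zero:
  fixes u v :: "real^2" and f :: "real^2 \<Rightarrow> real^2"
  assumes "C1 f" "norm u = 1" "norm v = 1" "\<And>y. 1 < norm y \<Longrightarrow> f y = 0"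
    and Lop: "\<forall>x\<in>ball 0 1. Lop \<alpha> u v f x = 0" and x: "x \<in> ball 0 1"
  shows "\<alpha> * frechet_derivative (ray_transform f v) (at x) u = - (u \<bullet> f x)"
proof -
  note Ru = ray_transform_derivative_along_ray[OF assms(1,2) zero_le_one assms(4)]
  note Rv = ray_transform_derivative_along_ray[OF assms(1,3) zero_le_one assms(4)]
  let ?D = "\<lambda>h. \<alpha> * frechet_derivative (ray_transform f v) (at x) h"
  have "((\<lambda>y. \<alpha> * ray_transform f v y) has_derivative ?D) (at x)"
    using Rv(1) frechet_derivative_works by (blast intro: has_derivative_mult_right)
  then have "(ray_transform f u has_derivative ?D) (at x)"
    by (rule has_derivative_transform_within_open[where s="ball 0 1"])
      (use x Lop in \<open>auto simp: Lop_eq_ray_transform\<close>)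
  then have "frechet_derivative (ray_transform f u) (at x) = ?D"
    by (rule frechet_derivative_at[symmetric])
  with Ru(2)[of x] show ?thesis by simp
qed

lemma ray_transform_vanishes_near_circle:
  fixes u v :: "real^2" and f :: "real^2 \<Rightarrow> real^2"
  assumes "\<alpha> \<noteq> 0" and u: "norm u = 1" and v: "v = vector [-(u$1), u$2]" and uu: "u$1 * u$2 \<noteq> 0"
    and f: "C1 f" and "0 \<le> r" "r < 1" and vanish: "\<And>y. r < norm y \<Longrightarrow> f y = 0"
    and Lop: "\<forall>x\<in>ball 0 1. Lop \<alpha> u v f x = 0"
    and y: "r < norm y" "norm y < 1"
  shows "ray_transform f v y = 0"
proof -
  have nv: "norm v = 1" using u v by (simp add: norm_reflect_vec2)
  have vanish1: "\<And>y. 1 < norm y \<Longrightarrow> f y = 0" using assms(7) vanish by simp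
  note Rv = ray_transform_derivative_along_ray[OF f nv zero_le_one vanish1]
  have zero_derivative: "(ray_transform f v has_derivative (\<lambda>h. 0)) (at z)"
    if "r < norm z" "norm z < 1" for z
  proof -
    let ?D = "frechet_derivative (ray_transform f v) (at z)"
    have lin: "linear ?D"
      using Rv(1) frechet_derivative_works has_derivative_linear by blast
    have "?D v = 0" using Rv(2)[of z] vanish[OF that(1)] by simp
    moreover have "?D u = 0"
      using frechet_derivative_ray_transform_of_Lop_zero[OF f u nv vanish1 Lop, of z]
        vanish[OF that(1)] that(2) assms(1) by simp
    ultimately have "?D = (\<lambda>h. 0)"
      using linear_vec2_eq_0_if_zero_at_u_v[OF lin uu v] by auto
    then show ?thesis using Rv(1) frechet_derivative_works by metis
  qed
  define x0 where "x0 = ((1 + r) / 2) *\<^sub>R v"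
  have "norm x0 = (1 + r) / 2" using nv assms(6) by (simp add: x0_def)
  moreover have "ray_transform f v x0 = 0"
  proof -
    have "v \<bullet> f (x0 + t *\<^sub>R v) = 0" if "0 \<le> t" for t
    proof -
      have "norm (x0 + t *\<^sub>R v) = (1 + r) / 2 + t"
        using nv assms(6) that by (simp add: x0_def scaleR_add_left[symmetric])
      then have "r < norm (x0 + t *\<^sub>R v)" using assms(7) that by (simp add: field_simps)
      then show ?thesis using vanish by simp
    qed
    then show ?thesis
      unfolding ray_transform_def by (intro integral_unique has_integral_is_0) simp
  qed
  ultimately show ?thesis
    using has_derivative_zero_unique_annulus[where r=r and R=1, of "ray_transform f v" y x0]
      zero_derivative y assms(7) by simp
qed

lemma eq_tgrad_if_Lop_zero:
  fixes u v :: "real^2" and f :: "real^2 \<Rightarrow> real^2"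
  assumes "\<alpha> \<noteq> 0" and u: "norm u = 1" and v: "v = vector [-(u$1), u$2]" and uu: "u$1 * u$2 \<noteq> 0"
    and f: "C1 f" and "0 \<le> r" "r < 1" and vanish: "\<And>y. r < norm y \<Longrightarrow> f y = 0"
    and Lop: "\<forall>x\<in>ball 0 1. Lop \<alpha> u v f x = 0"
  shows "\<exists>\<phi>. (\<forall>x. \<phi> differentiable at x) \<and> (\<forall>x. f x = tgrad \<alpha> u \<phi> x)"
proof -
  have nv: "norm v = 1" using u v by (simp add: norm_reflect_vec2)
  have vanish1: "\<And>y. 1 < norm y \<Longrightarrow> f y = 0" using assms(7) vanish by simp
  note Rv = ray_transform_derivative_along_ray[OF f nv zero_le_one vanish1]
  define c where "c = 2 * u$1 * u$2"
  have "c \<noteq> 0" using uu by (simp add: c_def)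
  define \<phi> where "\<phi> = (\<lambda>y. if norm y < 1 then ray_transform f v y / c else 0)"
  define D where "D = (\<lambda>x. if norm x < 1
    then (\<lambda>h. frechet_derivative (ray_transform f v) (at x) h / c) else (\<lambda>h. 0))"
  have D\<phi>: "(\<phi> has_derivative D x) (at x)" for x
    unfolding \<phi>_def D_def
  proof (rule has_derivative_zero_extension_ball[OF _ assms(7)])
    show "((\<lambda>y. ray_transform f v y / c) has_derivative
        (\<lambda>h. frechet_derivative (ray_transform f v) (at x) h / c)) (at x)" for x
      using Rv(1)[of x] \<open>c \<noteq> 0\<close> unfolding frechet_derivative_works
      by (auto intro!: derivative_eq_intros)
    show "ray_transform f v y / c = 0" if "r < norm y" "norm y < 1" for y
      using ray_transform_vanishes_near_circle[OF assms(1) u v uu f assms(6,7) vanish Lop that] by simp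
  qed
  have \<phi>: "\<phi> differentiable at x" for x
    using D\<phi> differentiable_def by blast
  have D: "frechet_derivative \<phi> (at x) = D x" for x
    using frechet_derivative_at[OF D\<phi>] by simp
  have "f x = tgrad \<alpha> u \<phi> x" for x
  proof (cases "norm x < 1")
    case True
    let ?Dv = "frechet_derivative (ray_transform f v) (at x)"
    have "D x h = ?Dv h / c" for h using True by (simp add: D_def)
    then have "-2*\<alpha>*u$1*u$2 * D x u = - (\<alpha> * ?Dv u)" and "-2*u$1*u$2 * D x v = - ?Dv v"
      using \<open>c \<noteq> 0\<close> by (simp_all add: c_def)
    moreover have "\<alpha> * ?Dv u = - (u \<bullet> f x)"
      using frechet_derivative_ray_transform_of_Lop_zero[OF f u nv vanish1 Lop] True by simp
    moreover have "?Dv v = - (v \<bullet> f x)" by (rule Rv(2))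
    ultimately have "u \<bullet> f x = -2*\<alpha>*u$1*u$2 * D x u" and "v \<bullet> f x = -2*u$1*u$2 * D x v"
      by linarith+
    then show ?thesis unfolding eq_tgrad_iff[OF uu v \<phi>] D by blast
  next
    case False
    then have "tgrad \<alpha> u \<phi> x = 0"
      using tgrad_eq_0_iff[OF assms(1) uu v \<phi>] D by (simp add: D_def)
    moreover have "f x = 0" using vanish False assms(7) by simp
    ultimately show ?thesis by simp
  qed
  with \<phi> show ?thesis by blast
qed

lemma Lop_zero_iff_eq_tgrad:
  fixes u v :: "real^2" and f :: "real^2 \<Rightarrow> real^2"
  assumes "\<alpha> \<noteq> 0" "norm u = 1" "v = vector [-(u$1), u$2]" "u$1 * u$2 \<noteq> 0"
    and "C1 f" "0 \<le> r" "r < 1" "\<And>y. r < norm y \<Longrightarrow> f y = 0"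
  shows "(\<forall>x\<in>ball 0 1. Lop \<alpha> u v f x = 0) \<longleftrightarrow>
           (\<exists>\<phi>. (\<forall>x. \<phi> differentiable at x) \<and> (\<forall>x. f x = tgrad \<alpha> u \<phi> x))"
  using eq_tgrad_if_Lop_zero[OF assms] Lop_zero_if_eq_tgrad[OF assms(1-4) C1_imp_continuous[OF assms(5)] assms(7,8)]
  by blast

lemma supp_in_disc_vanishes_outside:
  assumes "supp_in_disc f"
  obtains r where "0 \<le> r" "r < 1" "\<And>y. r < norm y \<Longrightarrow> f y = 0"
proof -
  define K where "K = closure {x. f x \<noteq> 0}"
  have K: "compact K" "K \<subseteq> ball 0 1"
    using assms unfolding supp_in_disc_def K_def by auto
  have outside: "f y = 0" if "y \<notin> K" for y
    using that closure_subset[of "{x. f x \<noteq> 0}"] unfolding K_def by auto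
  show ?thesis
  proof (cases "K = {}")
    case True
    then show ?thesis using outside by (intro that[of 0]) auto
  next
    case False
    obtain m where m: "m \<in> K" "\<And>y. y \<in> K \<Longrightarrow> norm y \<le> norm m"
      using continuous_attains_sup[OF K(1) False continuous_on_norm_id] by blast
    have "f y = 0" if "norm m < norm y" for y
      using m(2)[of y] that outside by force
    moreover have "norm m < 1" using m(1) K(2) by auto
    ultimately show ?thesis by (intro that[of "norm m"]) auto
  qed
qed

theorem theorem7p1:
  fixes \<alpha> :: real and u v :: "real^2" and f :: "real^2 \<Rightarrow> real^2"
  assumes "\<alpha> \<noteq> 0"
    and "norm u = 1" and "v = vector [-(u$1), u$2]" and "u$1 * u$2 \<noteq> 0"
    and "C2 f" and "supp_in_disc f"
  shows "((\<forall>x\<in>ball 0 1. Lop \<alpha> u v f x = 0) \<longleftrightarrow>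
           (\<exists>\<phi>. (\<forall>x. \<phi> differentiable at x) \<and> (\<forall>x. f x = tgrad \<alpha> u \<phi> x)))
       \<and> ((\<forall>x\<in>ball 0 1. Top \<alpha> u v f x = 0) \<longleftrightarrow>
           (\<exists>\<psi>. (\<forall>x. \<psi> differentiable at x) \<and> (\<forall>x. f x = tgrad_perp \<alpha> u \<psi> x)))"
proof -
  obtain r where r: "0 \<le> r" "r < 1" and vanish: "\<And>y. r < norm y \<Longrightarrow> f y = 0"
    using supp_in_disc_vanishes_outside[OF assms(6)] by blast
  have "C1 f" using assms(5) by (rule C2_imp_C1)
  have "C1 (\<lambda>y. - perp (f y))"
    using \<open>C1 f\<close> bounded_linear_minus[OF bounded_linear_perp] by (rule C1_compose_bounded_linear)
  moreover have "- perp (f y) = 0" if "r < norm y" for y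
    using vanish[OF that] by (simp add: perp_def vec2_eq_iff)
  ultimately have "(\<forall>x\<in>ball 0 1. Lop \<alpha> u v (\<lambda>y. - perp (f y)) x = 0) \<longleftrightarrow>
      (\<exists>\<psi>. (\<forall>x. \<psi> differentiable at x) \<and> (\<forall>x. - perp (f x) = tgrad \<alpha> u \<psi> x))"
    by (rule Lop_zero_iff_eq_tgrad[OF assms(1-4) _ r])
  moreover have "(\<forall>x\<in>ball 0 1. Lop \<alpha> u v f x = 0) \<longleftrightarrow>
      (\<exists>\<phi>. (\<forall>x. \<phi> differentiable at x) \<and> (\<forall>x. f x = tgrad \<alpha> u \<phi> x))"
    by (rule Lop_zero_iff_eq_tgrad[OF assms(1-4) \<open>C1 f\<close> r vanish])
  ultimately show ?thesis
    unfolding Top_eq_Lop eq_tgrad_perp_iff by (rule conjI[rotated])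
qed

end
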